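(* Let $R\in\operatorname{Ob}(\hat{\mathcal C})$, $G=\mathrm{SL}_2(R)$, $\bar\rho:G\to\mathrm{GL}_2(k)$ induced by reduction, and $S\in\operatorname{Ob}(\hat{\mathcal C})$. For $a\in\mu_R$ let $a_S\in\mu_S$ be the unique element of $\mu_S$ with the same image in $k$ as $a$. Then every deformation of $\bar\rho$ to $S$ has a representative $\rho$ with $\rho\big(\mathrm{diag}(a,a^{-1})\big)=\mathrm{diag}(a_S,a_S^{-1})$ for all $a\in\mu_R$.
   Context: Let $k$ be a finite field. $\hat{\mathcal C}$ is the category of complete noetherian local commutative rings with residue field $k$, with local homomorphisms inducing the identity on $k$; $\mathfrak m_S$ is the maximal ideal of $S$. For $S\in\hat{\mathcal C}$, $\mu_S=\{x\in S: x^{\#k-1}=1\}$ (the Teichmüller lifts of $k^\times$), which maps bijectively onto $k^\times$. For a profinite group $G$ and continuous $\bar\rho:G\to\mathrm{GL}_n(k)$, a lift to $S$ is a continuous $\rho:G\to\mathrm{GL}_n(S)$ reducing to $\bar\rho$; lifts are strictly equivalent if conjugate by an element of $I+M_n(\mathfrak m_S)$; a deformation is a strict equivalence class. *)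

theory Defs
  imports "HOL-Analysis.Analysis"
begin

definition is_ideal :: "('a::comm_ring_1) set \<Rightarrow> bool" where
  "is_ideal I \<longleftrightarrow> 0 \<in> I \<and> (\<forall>x\<in>I. \<forall>y\<in>I. x + y \<in> I) \<and> (\<forall>r. \<forall>x\<in>I. r * x \<in> I)"

definition ideal_gen :: "('a::comm_ring_1) set \<Rightarrow> 'a set" where
  "ideal_gen F = {\<Sum>i<n. c i * x i | (n::nat) (c::nat \<Rightarrow> 'a) (x::nat \<Rightarrow> 'a). \<forall>i<n. x i \<in> F}"

definition finitely_generated_ideal :: "('a::comm_ring_1) set \<Rightarrow> bool" where
  "finitely_generated_ideal I \<longleftrightarrow> (\<exists>F. finite F \<and> F \<subseteq> I \<and> I = ideal_gen F)"

definition noetherian_ring :: "'a::comm_ring_1 itself \<Rightarrow> bool" where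
  "noetherian_ring _ \<longleftrightarrow> (\<forall>I::'a set. is_ideal I \<longrightarrow> finitely_generated_ideal I)"

fun ideal_pow :: "('a::comm_ring_1) set \<Rightarrow> nat \<Rightarrow> 'a set" where
  "ideal_pow I 0 = UNIV"
| "ideal_pow I (Suc n) = ideal_gen {x * y | x y. x \<in> I \<and> y \<in> ideal_pow I n}"

definition adically_complete :: "('a::comm_ring_1) set \<Rightarrow> bool" where
  "adically_complete I \<longleftrightarrow>
     (\<Inter>n. ideal_pow I n) = {0} \<and>
     (\<forall>x::nat \<Rightarrow> 'a. (\<forall>n. \<exists>N. \<forall>i\<ge>N. \<forall>j\<ge>N. x i - x j \<in> ideal_pow I n) \<longrightarrow>
        (\<exists>L. \<forall>n. \<exists>N. \<forall>i\<ge>N. x i - L \<in> ideal_pow I n))"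

definition ring_hom_to :: "('a::comm_ring_1 \<Rightarrow> 'k::field) \<Rightarrow> bool" where
  "ring_hom_to \<pi> \<longleftrightarrow> \<pi> 1 = 1 \<and> (\<forall>x y. \<pi> (x + y) = \<pi> x + \<pi> y) \<and> (\<forall>x y. \<pi> (x * y) = \<pi> x * \<pi> y)"

definition max_ideal :: "('a::comm_ring_1 \<Rightarrow> 'k::field) \<Rightarrow> 'a set" where
  "max_ideal \<pi> = {x. \<pi> x = 0}"

text \<open>(R, \<pi>) is a complete noetherian local ring with residue field k, the residue map being
  \<pi> : R \<rightarrow> k (surjective ring hom whose kernel is the unique maximal ideal, i.e. every element
  outside the kernel is a unit).\<close>
definition Chat_obj :: "('a::comm_ring_1 \<Rightarrow> 'k::{field,finite}) \<Rightarrow> bool" where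
  "Chat_obj \<pi> \<longleftrightarrow> ring_hom_to \<pi> \<and> surj \<pi> \<and>
     (\<forall>x. \<pi> x \<noteq> 0 \<longrightarrow> (\<exists>y. x * y = 1)) \<and>
     noetherian_ring TYPE('a) \<and> adically_complete (max_ideal \<pi>)"

definition mu :: "'k::finite itself \<Rightarrow> ('a::comm_ring_1) set" where
  "mu _ = {x::'a. x ^ (CARD('k) - 1) = 1}"

definition teich_transfer :: "('r::comm_ring_1 \<Rightarrow> 'k::{field,finite}) \<Rightarrow> ('s::comm_ring_1 \<Rightarrow> 'k) \<Rightarrow> 'r \<Rightarrow> 's" where
  "teich_transfer \<pi>R \<pi>S a = (THE b. b \<in> (mu TYPE('k) :: 's set) \<and> \<pi>S b = \<pi>R a)"

definition ring_inv :: "'a::comm_ring_1 \<Rightarrow> 'a" where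
  "ring_inv x = (THE y. x * y = 1)"

definition SL2 :: "('a::comm_ring_1^2^2) set" where
  "SL2 = {A. det A = 1}"

definition GL2 :: "('a::comm_ring_1^2^2) set" where
  "GL2 = {A. invertible A}"

definition diag2 :: "'a::comm_ring_1 \<Rightarrow> 'a \<Rightarrow> 'a^2^2" where
  "diag2 a b = (\<chi> i j. if i = j then (if i = 1 then a else b) else 0)"

definition mat_map :: "('a \<Rightarrow> 'b) \<Rightarrow> 'a^'n^'m \<Rightarrow> 'b^'n^'m" where
  "mat_map f A = (\<chi> i j. f (A $ i $ j))"

definition mat_cong :: "('a::comm_ring_1) set \<Rightarrow> 'a^'n^'m \<Rightarrow> 'a^'n^'m \<Rightarrow> bool" where
  "mat_cong I A B \<longleftrightarrow> (\<forall>i j. A $ i $ j - B $ i $ j \<in> I)"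

text \<open>rho : SL_2(R) \<rightarrow> GL_2(S) is a continuous homomorphism (for the m_R-adic, resp.
  m_S-adic topologies) reducing to the representation rhobar : SL_2(R) \<rightarrow> GL_2(k)
  induced by reduction.\<close>
definition is_lift :: "('r::comm_ring_1 \<Rightarrow> 'k::{field,finite}) \<Rightarrow> ('s::comm_ring_1 \<Rightarrow> 'k)
    \<Rightarrow> ('r^2^2 \<Rightarrow> 's^2^2) \<Rightarrow> bool" where
  "is_lift \<pi>R \<pi>S \<rho> \<longleftrightarrow>
     (\<forall>g\<in>SL2. \<rho> g \<in> GL2) \<and>
     (\<forall>g\<in>SL2. \<forall>h\<in>SL2. \<rho> (g ** h) = \<rho> g ** \<rho> h) \<and>
     (\<forall>g\<in>SL2. \<forall>n. \<exists>m. \<forall>h\<in>SL2. mat_cong (ideal_pow (max_ideal \<pi>R) m) h g \<longrightarrow>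
         mat_cong (ideal_pow (max_ideal \<pi>S) n) (\<rho> h) (\<rho> g)) \<and>
     (\<forall>g\<in>SL2. mat_map \<pi>S (\<rho> g) = mat_map \<pi>R g)"

definition strictly_equiv :: "('s::comm_ring_1 \<Rightarrow> 'k::{field,finite})
    \<Rightarrow> ('r::comm_ring_1^2^2 \<Rightarrow> 's^2^2) \<Rightarrow> ('r^2^2 \<Rightarrow> 's^2^2) \<Rightarrow> bool" where
  "strictly_equiv \<pi>S \<rho> \<rho>' \<longleftrightarrow>
     (\<exists>P Q. P ** Q = mat 1 \<and> Q ** P = mat 1 \<and> mat_cong (max_ideal \<pi>S) P (mat 1) \<and>
        (\<forall>g\<in>SL2. \<rho>' g = P ** \<rho> g ** Q))"

end

theory Submission
  imports Defs
begin

text \<open>Write \<open>q = #k\<close>. Every \<open>l \<in> k\<^sup>\<times>\<close> has a unique lift \<open>teich \<pi> l\<close> with \<open>(teich \<pi> l)\<^sup>q\<^sup>-\<^sup>1 = 1\<close>: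
  Newton iteration on \<open>X\<^sup>q\<^sup>-\<^sup>1 - 1\<close> converges \<open>m\<close>-adically because its derivative at a unit is
  again a unit (\<open>q - 1 = -1\<close> in \<open>k\<close>).  Hence \<open>l \<mapsto> teich \<pi> l\<close> is multiplicative and \<open>\<mu>\<close> consists of
  these lifts.  For a lift \<open>\<rho>\<close>, \<open>A l = \<rho> (diag (teich \<pi>\<^sub>R l) (teich \<pi>\<^sub>R l\<inverse>))\<close> and
  \<open>B l = diag (teich \<pi>\<^sub>S l) (teich \<pi>\<^sub>S l\<inverse>)\<close> are representations of the finite group \<open>k\<^sup>\<times>\<close> with the
  same reduction.  The average \<open>P = - (\<Sum>l. B (l\<inverse>) A l)\<close> intertwines them and reduces to the identity,
  because \<open>#k\<^sup>\<times> = -1\<close> in \<open>k\<close>; conjugation by \<open>P\<close> is therefore a strict equivalence moving the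
  diagonal torus onto the Teichmueller matrices.\<close>

lemma ring_hom_to_1: "ring_hom_to \<pi> \<Longrightarrow> \<pi> 1 = 1"
  by (simp add: ring_hom_to_def)

lemma ring_hom_to_add: "ring_hom_to \<pi> \<Longrightarrow> \<pi> (x + y) = \<pi> x + \<pi> y"
  by (simp add: ring_hom_to_def)

lemma ring_hom_to_mult: "ring_hom_to \<pi> \<Longrightarrow> \<pi> (x * y) = \<pi> x * \<pi> y"
  by (simp add: ring_hom_to_def)

lemma ring_hom_to_0:
  assumes "ring_hom_to \<pi>"
  shows "\<pi> 0 = 0"
proof -
  have "\<pi> 0 + \<pi> 0 = \<pi> 0 + 0" using ring_hom_to_add[OF assms, of 0 0] by simp
  then show ?thesis by (rule add_left_imp_eq)
qed

lemma ring_hom_to_uminus: "ring_hom_to \<pi> \<Longrightarrow> \<pi> (- x) = - \<pi> x"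
  using ring_hom_to_add[of \<pi> x "-x"] ring_hom_to_0[of \<pi>] by (simp add: add_eq_0_iff2)

lemma ring_hom_to_diff: "ring_hom_to \<pi> \<Longrightarrow> \<pi> (x - y) = \<pi> x - \<pi> y"
  using ring_hom_to_add[of \<pi> x "-y"] ring_hom_to_uminus[of \<pi> y] by simp

lemma ring_hom_to_power: "ring_hom_to \<pi> \<Longrightarrow> \<pi> (x ^ n) = \<pi> x ^ n"
  by (induction n) (simp_all add: ring_hom_to_1 ring_hom_to_mult)

lemma ring_hom_to_of_nat: "ring_hom_to \<pi> \<Longrightarrow> \<pi> (of_nat n) = of_nat n"
  by (induction n) (simp_all add: ring_hom_to_1 ring_hom_to_add ring_hom_to_0)

lemma ring_hom_to_sum: "ring_hom_to \<pi> \<Longrightarrow> \<pi> (sum f A) = (\<Sum>x\<in>A. \<pi> (f x))"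
  by (induction A rule: infinite_finite_induct) (simp_all add: ring_hom_to_0 ring_hom_to_add)

lemma is_ideal_max_ideal: "ring_hom_to \<pi> \<Longrightarrow> is_ideal (max_ideal \<pi>)"
  by (simp add: is_ideal_def max_ideal_def ring_hom_to_0 ring_hom_to_add ring_hom_to_mult)

lemma diff_in_max_ideal_iff: "ring_hom_to \<pi> \<Longrightarrow> x - y \<in> max_ideal \<pi> \<longleftrightarrow> \<pi> x = \<pi> y"
  by (simp add: max_ideal_def ring_hom_to_diff)

lemma ideal_add: "is_ideal J \<Longrightarrow> x \<in> J \<Longrightarrow> y \<in> J \<Longrightarrow> x + y \<in> J"
  unfolding is_ideal_def by blast

lemma ideal_mult_left: "is_ideal J \<Longrightarrow> x \<in> J \<Longrightarrow> r * x \<in> J"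
  unfolding is_ideal_def by blast

lemma ideal_mult_right: "is_ideal J \<Longrightarrow> x \<in> J \<Longrightarrow> x * r \<in> J"
  unfolding is_ideal_def by (simp add: mult.commute)

lemma ideal_uminus: "is_ideal J \<Longrightarrow> x \<in> J \<Longrightarrow> - x \<in> J"
  using ideal_mult_left[of J x "-1"] by simp

lemma ideal_diff: "is_ideal J \<Longrightarrow> x \<in> J \<Longrightarrow> y \<in> J \<Longrightarrow> x - y \<in> J"
  using ideal_add[of J x "- y"] ideal_uminus[of J y] by simp

lemma ideal_sum: "is_ideal J \<Longrightarrow> (\<And>x. x \<in> A \<Longrightarrow> f x \<in> J) \<Longrightarrow> sum f A \<in> J"
  by (induction A rule: infinite_finite_induct) (simp_all add: is_ideal_def)

lemma ideal_gen_least: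
  assumes J: "is_ideal J" and F: "F \<subseteq> J"
  shows "ideal_gen F \<subseteq> J"
proof
  fix a assume "a \<in> ideal_gen F"
  then obtain n :: nat and c x where "a = (\<Sum>i<n. c i * x i)" and "\<forall>i<n. x i \<in> F"
    unfolding ideal_gen_def by blast
  then show "a \<in> J"
    using F by (auto intro!: ideal_sum[OF J] ideal_mult_left[OF J])
qed

lemma mult_mem_ideal_gen: "x \<in> F \<Longrightarrow> r * x \<in> ideal_gen F"
  unfolding ideal_gen_def
  by (intro CollectI exI[of _ 1] exI[of _ "\<lambda>_. r"] exI[of _ "\<lambda>_. x"]) auto

lemma is_ideal_ideal_gen: "is_ideal (ideal_gen F)"
  unfolding is_ideal_def
proof (intro conjI ballI allI)
  show "0 \<in> ideal_gen F"
    unfolding ideal_gen_def by (intro CollectI exI[of _ 0]) auto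
next
  fix a b assume "a \<in> ideal_gen F" "b \<in> ideal_gen F"
  then obtain n m :: nat and c x d y where a: "a = (\<Sum>i<n. c i * x i)" "\<forall>i<n. x i \<in> F"
    and b: "b = (\<Sum>i<m. d i * y i)" "\<forall>i<m. y i \<in> F"
    unfolding ideal_gen_def by blast
  let ?c = "\<lambda>i. if i < n then c i else d (i - n)" and ?x = "\<lambda>i. if i < n then x i else y (i - n)"
  have "(\<Sum>i<n + k. ?c i * ?x i) = a + (\<Sum>i<k. d i * y i)" for k
    by (induction k) (simp_all add: a)
  then have sum: "a + b = (\<Sum>i<n + m. ?c i * ?x i)" by (simp add: b)
  have mem: "\<forall>i<n + m. ?x i \<in> F" using a(2) b(2) by auto
  show "a + b \<in> ideal_gen F"
    unfolding ideal_gen_def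
    by (rule CollectI, rule exI[of _ "n + m"], rule exI[of _ ?c], rule exI[of _ ?x]) (use sum mem in simp)
next
  fix r a assume "a \<in> ideal_gen F"
  then obtain n :: nat and c x where a: "a = (\<Sum>i<n. c i * x i)" "\<forall>i<n. x i \<in> F"
    unfolding ideal_gen_def by blast
  have "r * a = (\<Sum>i<n. (r * c i) * x i)" by (simp add: a sum_distrib_left mult.assoc)
  note ra = this
  show "r * a \<in> ideal_gen F"
    unfolding ideal_gen_def
    by (rule CollectI, rule exI[of _ n], rule exI[of _ "\<lambda>i. r * c i"], rule exI[of _ x]) (use ra a(2) in simp)
qed

lemma is_ideal_ideal_pow: "is_ideal (ideal_pow I n)"
proof (cases n)
  case 0
  then show ?thesis by (simp add: is_ideal_def)
next
  case (Suc m)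
  then show ?thesis by (simp only: ideal_pow.simps is_ideal_ideal_gen)
qed

lemma mult_mem_ideal_pow_Suc:
  assumes "x \<in> I" and "y \<in> ideal_pow I n"
  shows "x * y \<in> ideal_pow I (Suc n)"
proof -
  have "x * y \<in> {x * y |x y. x \<in> I \<and> y \<in> ideal_pow I n}" using assms by blast
  from mult_mem_ideal_gen[OF this, of 1] show ?thesis by simp
qed

lemma ideal_pow_Suc_subset: "ideal_pow I (Suc n) \<subseteq> ideal_pow I n"
  unfolding ideal_pow.simps(2)
  by (rule ideal_gen_least[OF is_ideal_ideal_pow]) (auto intro: ideal_mult_left[OF is_ideal_ideal_pow])

lemma ideal_pow_antimono: "m \<le> n \<Longrightarrow> ideal_pow I n \<subseteq> ideal_pow I m"
proof (induction n rule: dec_induct)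
  case (step n)
  then show ?case using ideal_pow_Suc_subset[of I n] by blast
qed simp

lemma ideal_pow_1:
  assumes "is_ideal I"
  shows "ideal_pow I 1 = I"
proof
  show "ideal_pow I 1 \<subseteq> I"
    by (simp only: One_nat_def ideal_pow.simps(2))
      (rule ideal_gen_least[OF assms], auto intro: ideal_mult_right[OF assms])
  show "I \<subseteq> ideal_pow I 1"
    using mult_mem_ideal_pow_Suc[of _ I 1 0] by auto
qed

lemma adic_limit_exists:
  fixes s :: "nat \<Rightarrow> 'a::comm_ring_1"
  assumes complete: "adically_complete I"
    and steps: "\<And>j. s (Suc j) - s j \<in> ideal_pow I j"
  shows "\<exists>L. \<forall>n. \<exists>N. \<forall>i\<ge>N. s i - L \<in> ideal_pow I n"
proof -
  have tail: "s i - s N \<in> ideal_pow I N" if "N \<le> i" for N i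
    using that
  proof (induction i rule: dec_induct)
    case base
    then show ?case using is_ideal_ideal_pow[of I N] by (simp add: is_ideal_def)
  next
    case (step i)
    have "s (Suc i) - s i \<in> ideal_pow I N"
      using steps[of i] ideal_pow_antimono[OF step.hyps(1), of I] by blast
    from ideal_add[OF is_ideal_ideal_pow this step.IH] show ?case by simp
  qed
  have "s i - s j \<in> ideal_pow I n" if "n \<le> i" "n \<le> j" for n i j
    using ideal_diff[OF is_ideal_ideal_pow tail[OF that(1)] tail[OF that(2)]] by simp
  then have cauchy: "\<And>n. \<exists>N. \<forall>i\<ge>N. \<forall>j\<ge>N. s i - s j \<in> ideal_pow I n" by blast
  from complete have "\<forall>x::nat \<Rightarrow> 'a. (\<forall>n. \<exists>N. \<forall>i\<ge>N. \<forall>j\<ge>N. x i - x j \<in> ideal_pow I n) \<longrightarrow>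
      (\<exists>L. \<forall>n. \<exists>N. \<forall>i\<ge>N. x i - L \<in> ideal_pow I n)"
    by (simp add: adically_complete_def)
  from this[rule_format, OF cauchy] show ?thesis .
qed

lemma adic_limit_power_eq:
  assumes complete: "adically_complete I"
    and lim: "\<And>n. \<exists>N. \<forall>i\<ge>N. s i - L \<in> ideal_pow I n"
    and approx: "\<And>i. s i ^ d - c \<in> ideal_pow I i"
  shows "L ^ d = c"
proof -
  have "L ^ d - c \<in> ideal_pow I n" for n
  proof -
    obtain N where N: "\<forall>i\<ge>N. s i - L \<in> ideal_pow I n" using lim by blast
    define i where "i = max N n"
    have "s i ^ d - L ^ d = (s i - L) * (\<Sum>t<d. L ^ (d - Suc t) * s i ^ t)"
      by (rule power_diff_sumr2)
    moreover have "s i - L \<in> ideal_pow I n" using N by (simp add: i_def)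
    ultimately have L_close: "s i ^ d - L ^ d \<in> ideal_pow I n"
      by (simp add: ideal_mult_right[OF is_ideal_ideal_pow])
    have c_close: "s i ^ d - c \<in> ideal_pow I n"
      using approx[of i] ideal_pow_antimono[of n i I] by (auto simp: i_def)
    have "(s i ^ d - c) - (s i ^ d - L ^ d) \<in> ideal_pow I n"
      by (rule ideal_diff[OF is_ideal_ideal_pow c_close L_close])
    then show ?thesis by simp
  qed
  then have "L ^ d - c \<in> (\<Inter>n. ideal_pow I n)" by blast
  then show ?thesis
    using complete unfolding adically_complete_def by simp
qed

lemma two_le_CARD_field: "2 \<le> CARD('k::{field,finite})"
  using card_mono[of UNIV "{0::'k, 1}"] by simp

lemma of_nat_CARD_field: "of_nat CARD('k::{field,finite}) = (0::'k)"
proof -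
  have "(\<Sum>x\<in>UNIV. x + 1) = (\<Sum>x\<in>(UNIV::'k set). x)"
    by (rule sum.reindex_bij_witness[of _ "\<lambda>x. x - 1" "\<lambda>x. x + 1"]) auto
  then show ?thesis by (simp add: sum.distrib)
qed

lemma of_nat_CARD_minus_1_field: "of_nat (CARD('k::{field,finite}) - 1) = (-1::'k)"
  using of_nat_CARD_field[where 'k='k] two_le_CARD_field[where 'k='k]
  by (simp add: of_nat_diff eq_neg_iff_add_eq_0)

lemma power_CARD_minus_1_field:
  fixes l :: "'k::{field,finite}"
  assumes "l \<noteq> 0"
  shows "l ^ (CARD('k) - 1) = 1"
proof -
  let ?U = "UNIV - {0::'k}"
  have "bij_betw ((*) l) ?U ?U"
    by (rule bij_betw_byWitness[of _ "\<lambda>x. x / l"]) (use assms in auto)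
  then have "(\<Prod>x\<in>?U. l * x) = (\<Prod>x\<in>?U. x)"
    using prod.reindex_bij_betw[of "(*) l" ?U ?U "\<lambda>x. x"] by simp
  then have "l ^ card ?U * (\<Prod>x\<in>?U. x) = 1 * (\<Prod>x\<in>?U. x)"
    by (simp add: prod.distrib)
  moreover have "(\<Prod>x\<in>?U. x) \<noteq> 0" by simp
  ultimately show ?thesis by (simp add: card_Diff_subset)
qed

lemma nonzero_if_power_CARD_minus_1_field:
  "(l::'k::{field,finite}) ^ (CARD('k) - 1) = 1 \<Longrightarrow> l \<noteq> 0"
  using two_le_CARD_field[where 'k='k] by (cases "CARD('k) - 1") auto

lemma Chat_obj_ring_hom: "Chat_obj \<pi> \<Longrightarrow> ring_hom_to \<pi>"
  by (simp add: Chat_obj_def)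

lemma Chat_obj_unit: "Chat_obj \<pi> \<Longrightarrow> \<pi> x \<noteq> 0 \<Longrightarrow> \<exists>y. x * y = 1"
  by (simp add: Chat_obj_def)

lemma Chat_obj_surj: "Chat_obj \<pi> \<Longrightarrow> \<exists>x. \<pi> x = l"
  by (metis Chat_obj_def surj_def)

lemma Chat_obj_complete: "Chat_obj \<pi> \<Longrightarrow> adically_complete (max_ideal \<pi>)"
  by (simp add: Chat_obj_def)

lemma power_add_first_order:
  fixes x h :: "'a::comm_ring_1"
  shows "\<exists>r. (x + h) ^ n = x ^ n + of_nat n * x ^ (n - 1) * h + h\<^sup>2 * r"
proof (induction n)
  case 0
  show ?case by (intro exI[of _ 0]) simp
next
  case (Suc n)
  then obtain r where r: "(x + h) ^ n = x ^ n + of_nat n * x ^ (n - 1) * h + h\<^sup>2 * r" by blast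
  have x_n: "x * (of_nat n * x ^ (n - 1)) = of_nat n * x ^ n"
    by (cases n) (simp_all add: algebra_simps)
  have "(x + h) ^ Suc n = (x + h) * (x ^ n + of_nat n * x ^ (n - 1) * h + h\<^sup>2 * r)"
    by (simp add: r)
  also have "\<dots> = x ^ Suc n + of_nat (Suc n) * x ^ (Suc n - 1) * h
      + h\<^sup>2 * (of_nat n * x ^ (n - 1) + r * (x + h))"
    using x_n by (simp add: algebra_simps power2_eq_square)
  finally show ?case by blast
qed

lemma teich_newton_step:
  fixes \<pi> :: "'a::comm_ring_1 \<Rightarrow> 'k::{field,finite}"
  assumes C: "Chat_obj \<pi>" and unit: "\<pi> x \<noteq> 0" and "0 < j"
    and approx: "x ^ (CARD('k) - 1) - 1 \<in> ideal_pow (max_ideal \<pi>) j"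
  shows "\<exists>x'. \<pi> x' = \<pi> x \<and> x' - x \<in> ideal_pow (max_ideal \<pi>) j \<and>
           x' ^ (CARD('k) - 1) - 1 \<in> ideal_pow (max_ideal \<pi>) (Suc j)"
proof -
  let ?d = "CARD('k) - 1" and ?m = "max_ideal \<pi>"
  have H: "ring_hom_to \<pi>" using C by (rule Chat_obj_ring_hom)
  have I: "is_ideal ?m" using H by (rule is_ideal_max_ideal)
  have Ij: "is_ideal (ideal_pow ?m j)" by (rule is_ideal_ideal_pow)
  define e where "e = x ^ ?d - 1"
  define w where "w = of_nat ?d * x ^ (?d - 1)"
  have "\<pi> w = - (\<pi> x ^ (?d - 1))"
    unfolding w_def ring_hom_to_mult[OF H] ring_hom_to_of_nat[OF H] ring_hom_to_power[OF H]
      of_nat_CARD_minus_1_field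
    by simp
  then obtain u where u: "w * u = 1" using Chat_obj_unit[OF C] unit by fastforce
  \<comment> \<open>Newton's correction \<open>-f(x)/f'(x)\<close> for \<open>f = X\<^sup>d - 1\<close>, where \<open>w = f'(x)\<close>\<close>
  define h where "h = - (u * e)"
  have hj: "h \<in> ideal_pow ?m j"
    unfolding h_def e_def using approx ideal_mult_left[OF Ij] ideal_uminus[OF Ij] by blast
  then have hm: "h \<in> ?m"
    using ideal_pow_antimono[of 1 j ?m] ideal_pow_1[OF I] \<open>0 < j\<close> by auto
  obtain r where r: "(x + h) ^ ?d = x ^ ?d + w * h + h\<^sup>2 * r"
    using power_add_first_order[of x h ?d] unfolding w_def by blast
  have "w * h = - e" unfolding h_def using u by (simp add: mult.assoc[symmetric])
  with r have "(x + h) ^ ?d = 1 + h\<^sup>2 * r" by (simp add: e_def)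
  then have "(x + h) ^ ?d - 1 = (h * r) * h"
    by (simp add: power2_eq_square mult_ac)
  moreover have "h * r \<in> ?m" using hm ideal_mult_right[OF I] by blast
  ultimately have "(x + h) ^ ?d - 1 \<in> ideal_pow ?m (Suc j)"
    using mult_mem_ideal_pow_Suc[OF _ hj] by simp
  moreover have "\<pi> (x + h) = \<pi> x" using hm by (simp add: ring_hom_to_add[OF H] max_ideal_def)
  ultimately show ?thesis using hj by (intro exI[of _ "x + h"] conjI) simp_all
qed

lemma teich_exists:
  fixes \<pi> :: "'a::comm_ring_1 \<Rightarrow> 'k::{field,finite}"
  assumes C: "Chat_obj \<pi>" and l: "l \<noteq> 0"
  shows "\<exists>b. b ^ (CARD('k) - 1) = 1 \<and> \<pi> b = l"
proof -
  let ?d = "CARD('k) - 1" and ?m = "max_ideal \<pi>"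
  have H: "ring_hom_to \<pi>" using C by (rule Chat_obj_ring_hom)
  have I: "is_ideal ?m" using H by (rule is_ideal_max_ideal)
  obtain x0 where x0: "\<pi> x0 = l" using Chat_obj_surj[OF C] by blast
  have "x0 ^ ?d - 1 \<in> ideal_pow ?m (Suc 0)"
    using ideal_pow_1[OF I] power_CARD_minus_1_field[OF l]
    by (simp add: max_ideal_def ring_hom_to_diff[OF H] ring_hom_to_power[OF H] ring_hom_to_1[OF H] x0)
  note start = this
  have "\<exists>s. \<forall>j. (\<pi> (s j) = l \<and> s j ^ ?d - 1 \<in> ideal_pow ?m (Suc j))
      \<and> s (Suc j) - s j \<in> ideal_pow ?m (Suc j)"
  proof (rule dependent_nat_choice)
    show "\<exists>x. \<pi> x = l \<and> x ^ ?d - 1 \<in> ideal_pow ?m (Suc 0)"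
      using x0 start by blast
  next
    fix x j assume x: "\<pi> x = l \<and> x ^ ?d - 1 \<in> ideal_pow ?m (Suc j)"
    then have "\<pi> x \<noteq> 0" using l by simp
    from teich_newton_step[OF C this zero_less_Suc conjunct2[OF x]] obtain y where
      "\<pi> y = \<pi> x" "y - x \<in> ideal_pow ?m (Suc j)" "y ^ ?d - 1 \<in> ideal_pow ?m (Suc (Suc j))"
      by blast
    then show "\<exists>y. (\<pi> y = l \<and> y ^ ?d - 1 \<in> ideal_pow ?m (Suc (Suc j))) \<and> y - x \<in> ideal_pow ?m (Suc j)"
      using x by auto
  qed
  then obtain s where s: "\<And>j. \<pi> (s j) = l" "\<And>j. s j ^ ?d - 1 \<in> ideal_pow ?m (Suc j)"
    and steps: "\<And>j. s (Suc j) - s j \<in> ideal_pow ?m (Suc j)"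
    by blast
  have "s (Suc j) - s j \<in> ideal_pow ?m j" for j
    using steps ideal_pow_Suc_subset by blast
  then obtain L where L: "\<And>n. \<exists>N. \<forall>i\<ge>N. s i - L \<in> ideal_pow ?m n"
    using adic_limit_exists[OF Chat_obj_complete[OF C]] by blast
  have "s i ^ ?d - 1 \<in> ideal_pow ?m i" for i
    using s(2) ideal_pow_Suc_subset by blast
  then have "L ^ ?d = 1"
    by (rule adic_limit_power_eq[OF Chat_obj_complete[OF C] L])
  moreover have "\<pi> L = l"
  proof -
    obtain N where "s N - L \<in> ideal_pow ?m 1" using L by blast
    then show ?thesis using s(1)[of N] ideal_pow_1[OF I] diff_in_max_ideal_iff[OF H] by simp
  qed
  ultimately show ?thesis by blast
qed

lemma teich_unique:
  fixes \<pi> :: "'a::comm_ring_1 \<Rightarrow> 'k::{field,finite}"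
  assumes C: "Chat_obj \<pi>" and b: "b ^ (CARD('k) - 1) = 1" and c: "c ^ (CARD('k) - 1) = 1"
    and bc: "\<pi> b = \<pi> c"
  shows "b = c"
proof -
  let ?d = "CARD('k) - 1"
  have H: "ring_hom_to \<pi>" using C by (rule Chat_obj_ring_hom)
  define S where "S = (\<Sum>t<?d. c ^ (?d - Suc t) * b ^ t)"
  have "\<pi> b ^ ?d = 1" using b by (metis ring_hom_to_power[OF H] ring_hom_to_1[OF H])
  then have "\<pi> b \<noteq> 0" by (rule nonzero_if_power_CARD_minus_1_field)
  have "\<pi> S = (\<Sum>t<?d. \<pi> b ^ (?d - Suc t) * \<pi> b ^ t)"
    unfolding S_def by (simp add: ring_hom_to_sum[OF H] ring_hom_to_mult[OF H] ring_hom_to_power[OF H] bc)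
  also have "\<dots> = (\<Sum>t<?d. \<pi> b ^ (?d - 1))"
    by (rule sum.cong) (auto simp: power_add[symmetric] numeral_2_eq_2)
  also have "\<dots> = - (\<pi> b ^ (?d - 1))"
    by (simp only: sum_constant card_lessThan of_nat_CARD_minus_1_field) simp
  finally have "\<pi> S \<noteq> 0" using \<open>\<pi> b \<noteq> 0\<close> by simp
  then obtain v where v: "S * v = 1" using Chat_obj_unit[OF C] by blast
  have "(b - c) * S = 0" using power_diff_sumr2[of b ?d c] b c by (simp add: S_def)
  have "b - c = (b - c) * (S * v)" by (simp add: v)
  also have "\<dots> = 0" using \<open>(b - c) * S = 0\<close> by (simp add: mult.assoc[symmetric])
  finally show ?thesis by simp
qed

definition teich :: "('a::comm_ring_1 \<Rightarrow> 'k::{field,finite}) \<Rightarrow> 'k \<Rightarrow> 'a" where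
  "teich \<pi> l = (THE b. b ^ (CARD('k) - 1) = 1 \<and> \<pi> b = l)"

lemma teich_ex1:
  fixes \<pi> :: "'a::comm_ring_1 \<Rightarrow> 'k::{field,finite}"
  assumes "Chat_obj \<pi>" and "l \<noteq> 0"
  shows "\<exists>!b. b ^ (CARD('k) - 1) = 1 \<and> \<pi> b = l"
  using teich_exists[OF assms] teich_unique[OF assms(1)] by metis

lemma
  fixes \<pi> :: "'a::comm_ring_1 \<Rightarrow> 'k::{field,finite}"
  assumes "Chat_obj \<pi>" and "l \<noteq> 0"
  shows teich_power_CARD_minus_1: "teich \<pi> l ^ (CARD('k) - 1) = 1"
    and teich_residue: "\<pi> (teich \<pi> l) = l"
  using theI'[OF teich_ex1[OF assms]] unfolding teich_def by auto

lemma teich_eqI: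
  fixes \<pi> :: "'a::comm_ring_1 \<Rightarrow> 'k::{field,finite}"
  assumes C: "Chat_obj \<pi>" and b: "b ^ (CARD('k) - 1) = 1" and l: "\<pi> b = l"
  shows "teich \<pi> l = b"
proof -
  have H: "ring_hom_to \<pi>" using C by (rule Chat_obj_ring_hom)
  have "l ^ (CARD('k) - 1) = 1" using b l by (metis ring_hom_to_power[OF H] ring_hom_to_1[OF H])
  then have "l \<noteq> 0" by (rule nonzero_if_power_CARD_minus_1_field)
  then show ?thesis
    unfolding teich_def using teich_ex1[OF C] b l by (intro the1_equality) auto
qed

lemma teich_mult:
  fixes \<pi> :: "'a::comm_ring_1 \<Rightarrow> 'k::{field,finite}"
  assumes C: "Chat_obj \<pi>" and l: "l \<noteq> 0" and m: "m \<noteq> 0"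
  shows "teich \<pi> (l * m) = teich \<pi> l * teich \<pi> m"
  using teich_power_CARD_minus_1[OF C l] teich_power_CARD_minus_1[OF C m]
    teich_residue[OF C l] teich_residue[OF C m]
  by (intro teich_eqI[OF C]) (simp_all add: power_mult_distrib ring_hom_to_mult[OF Chat_obj_ring_hom[OF C]])

lemma teich_mult_inverse:
  fixes \<pi> :: "'a::comm_ring_1 \<Rightarrow> 'k::{field,finite}"
  assumes C: "Chat_obj \<pi>" and l: "l \<noteq> 0"
  shows "teich \<pi> l * teich \<pi> (inverse l) = 1"
proof -
  have "teich \<pi> 1 = (1::'a)"
    by (rule teich_eqI[OF C]) (simp_all add: ring_hom_to_1[OF Chat_obj_ring_hom[OF C]])
  then show ?thesis using teich_mult[OF C l, of "inverse l"] l by simp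
qed

lemma ring_inv_eqI: "x * y = 1 \<Longrightarrow> ring_inv x = (y::'a::comm_ring_1)"
  unfolding ring_inv_def
proof (rule the_equality)
  fix z assume "x * y = 1" "x * z = 1"
  then have "y * (x * z) = y" by simp
  then show "z = y" using \<open>x * y = 1\<close> by (simp add: mult.assoc[symmetric] mult.commute)
qed

lemma teich_transfer_eq_teich: "teich_transfer \<pi>R \<pi>S a = teich \<pi>S (\<pi>R a)"
  by (simp add: teich_transfer_def teich_def mu_def)

lemma mat2_eq_iff:
  "(A::'a^2^2) = B \<longleftrightarrow> A$1$1 = B$1$1 \<and> A$1$2 = B$1$2 \<and> A$2$1 = B$2$1 \<and> A$2$2 = B$2$2"
  by (auto simp: vec_eq_iff forall_2)

lemma matrix_mult2_nth: "((A::'a::semiring_1^2^2) ** B) $ i $ j = A$i$1 * B$1$j + A$i$2 * B$2$j"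
  by (simp add: matrix_matrix_mult_def sum_2)

lemma diag2_nth: "diag2 a b $ 1 $ 1 = a" "diag2 a b $ 1 $ 2 = 0" "diag2 a b $ 2 $ 1 = 0" "diag2 a b $ 2 $ 2 = b"
  by (simp_all add: diag2_def)

lemma mat2_1_nth:
  "(mat 1 :: 'a::semiring_1^2^2) $ 1 $ 1 = 1" "(mat 1 :: 'a^2^2) $ 1 $ 2 = 0"
  "(mat 1 :: 'a^2^2) $ 2 $ 1 = 0" "(mat 1 :: 'a^2^2) $ 2 $ 2 = 1"
  by (simp_all add: mat_def)

lemma diag2_mult: "diag2 a b ** diag2 c d = diag2 (a * c) (b * d)"
  by (simp add: mat2_eq_iff matrix_mult2_nth diag2_nth)

lemma diag2_1: "diag2 1 1 = (mat 1 :: 'a::comm_ring_1^2^2)"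
  by (simp add: mat2_eq_iff diag2_nth mat2_1_nth)

lemma det_diag2: "det (diag2 a b) = a * b"
  by (simp add: det_2 diag2_nth)

lemma mat_map_nth: "mat_map f A $ i $ j = f (A $ i $ j)"
  by (simp add: mat_map_def)

lemma mat_map_mult:
  "ring_hom_to \<pi> \<Longrightarrow> mat_map \<pi> ((A::'a::comm_ring_1^'n^'m) ** (B::'a^'p^'n)) = mat_map \<pi> A ** mat_map \<pi> B"
  by (simp add: vec_eq_iff mat_map_nth matrix_matrix_mult_def ring_hom_to_sum ring_hom_to_mult)

lemma mat_map_mat: "ring_hom_to \<pi> \<Longrightarrow> mat_map \<pi> (mat c :: 'a::comm_ring_1^'n^'n) = mat (\<pi> c)"
  by (simp add: vec_eq_iff mat_map_nth mat_def ring_hom_to_0)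

lemma mat_map_diag2: "ring_hom_to \<pi> \<Longrightarrow> mat_map \<pi> (diag2 a b) = diag2 (\<pi> a) (\<pi> b)"
  by (simp add: mat2_eq_iff mat_map_nth diag2_nth ring_hom_to_0)

lemma mat_cong_max_ideal_iff:
  "ring_hom_to \<pi> \<Longrightarrow> mat_cong (max_ideal \<pi>) A B \<longleftrightarrow> mat_map \<pi> A = mat_map \<pi> B"
  by (simp add: mat_cong_def diff_in_max_ideal_iff vec_eq_iff mat_map_nth)

lemma matrix_sum_left: "(A::'a::comm_ring_1^'n^'m) ** sum f S = (\<Sum>x\<in>S. A ** (f x :: 'a^'p^'n))"
  by (induction S rule: infinite_finite_induct) (simp_all add: matrix_add_ldistrib)

lemma matrix_add_rdistrib: "((A::'a::comm_ring_1^'n^'m) + B) ** (C::'a^'p^'n) = A ** C + B ** C"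
  by (simp add: vec_eq_iff matrix_matrix_mult_def sum.distrib ring_distribs)

lemma matrix_sum_right: "sum f S ** (A::'a::comm_ring_1^'p^'n) = (\<Sum>x\<in>S. (f x :: 'a^'n^'m) ** A)"
  by (induction S rule: infinite_finite_induct) (simp_all add: matrix_add_rdistrib)

lemma matrix_uminus_left: "(- (A::'a::comm_ring_1^'n^'m)) ** (B::'a^'p^'n) = - (A ** B)"
  by (simp add: vec_eq_iff matrix_matrix_mult_def sum_negf)

lemma matrix_uminus_right: "(A::'a::comm_ring_1^'n^'m) ** (- (B::'a^'p^'n)) = - (A ** B)"
  by (simp add: vec_eq_iff matrix_matrix_mult_def sum_negf)

lemma matrix_diff_left: "((A::'a::comm_ring_1^'n^'m) - B) ** (C::'a^'p^'n) = A ** C - B ** C"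
  by (simp add: vec_eq_iff matrix_matrix_mult_def sum_subtractf left_diff_distrib)

lemma matrix_diff_right: "(C::'a::comm_ring_1^'n^'m) ** ((A::'a^'p^'n) - B) = C ** A - C ** B"
  by (simp add: vec_eq_iff matrix_matrix_mult_def sum_subtractf right_diff_distrib)

lemma mat_cong_conj:
  assumes J: "is_ideal J" and "mat_cong J A B"
  shows "mat_cong J ((P::'a::comm_ring_1^'n^'m) ** (A::'a^'n^'n) ** (Q::'a^'p^'n)) (P ** B ** Q)"
proof -
  have "(A - B) $ i $ j \<in> J" for i j using assms(2) by (simp add: mat_cong_def)
  then have "(P ** (A - B)) $ i $ j \<in> J" for i j
    by (auto simp: matrix_matrix_mult_def intro!: ideal_sum[OF J] ideal_mult_left[OF J])
  then have "(P ** (A - B) ** Q) $ i $ j \<in> J" for i j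
    unfolding matrix_matrix_mult_def[of "P ** (A - B)" Q]
    by (auto intro!: ideal_sum[OF J] ideal_mult_right[OF J])
  then show ?thesis
    by (simp add: mat_cong_def matrix_diff_left matrix_diff_right)
qed

lemma invertible_if_mat_map_eq_1:
  fixes \<pi> :: "'a::comm_ring_1 \<Rightarrow> 'k::{field,finite}"
  assumes C: "Chat_obj \<pi>" and P: "mat_map \<pi> (P::'a^2^2) = mat 1"
  shows "\<exists>Q. P ** Q = mat 1 \<and> Q ** P = mat 1 \<and> mat_map \<pi> Q = mat 1"
proof -
  have H: "ring_hom_to \<pi>" using C by (rule Chat_obj_ring_hom)
  have "\<pi> (P$1$1) = 1" "\<pi> (P$1$2) = 0" "\<pi> (P$2$1) = 0" "\<pi> (P$2$2) = 1"
    using P by (simp_all add: mat2_eq_iff mat_map_nth mat2_1_nth)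
  then have "\<pi> (det P) = 1"
    by (simp add: det_2 ring_hom_to_diff[OF H] ring_hom_to_mult[OF H])
  then obtain v where v: "det P * v = 1" using Chat_obj_unit[OF C] by force
  define Q :: "'a^2^2" where
    "Q = (\<chi> i j. v * (if i = j then P$(3 - i)$(3 - j) else - P$i$j))"
  have Q: "Q$1$1 = v * P$2$2" "Q$1$2 = - (v * P$1$2)" "Q$2$1 = - (v * P$2$1)" "Q$2$2 = v * P$1$1"
    by (simp_all add: Q_def)
  have "v * (P$1$1 * P$2$2) - v * (P$1$2 * P$2$1) = 1"
    using v by (simp add: det_2 algebra_simps)
  then have PQ: "P ** Q = mat 1" and QP: "Q ** P = mat 1"
    by (simp_all add: mat2_eq_iff matrix_mult2_nth Q mat2_1_nth algebra_simps)
  have "mat_map \<pi> Q = mat_map \<pi> (Q ** P)"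
    using P by (simp add: mat_map_mult[OF H])
  then have "mat_map \<pi> Q = mat 1"
    using QP by (simp add: mat_map_mat[OF H] ring_hom_to_1[OF H])
  with PQ QP show ?thesis by blast
qed

lemma intertwiner_exists:
  fixes A B :: "'k::{field,finite} \<Rightarrow> 'a::comm_ring_1^'n^'n" and \<pi> :: "'a \<Rightarrow> 'k"
  assumes H: "ring_hom_to \<pi>"
    and A: "\<And>l m. l \<noteq> 0 \<Longrightarrow> m \<noteq> 0 \<Longrightarrow> A l ** A m = A (l * m)"
    and B: "\<And>l m. l \<noteq> 0 \<Longrightarrow> m \<noteq> 0 \<Longrightarrow> B l ** B m = B (l * m)"
    and reduction: "\<And>l. l \<noteq> 0 \<Longrightarrow> mat_map \<pi> (B (inverse l) ** A l) = mat 1"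
  shows "\<exists>P. mat_map \<pi> P = mat 1 \<and> (\<forall>l. l \<noteq> 0 \<longrightarrow> B l ** P = P ** A l)"
proof -
  define U where "U = UNIV - {0::'k}"
  define S where "S = (\<Sum>l\<in>U. B (inverse l) ** A l)"
  have "B m ** S = S ** A m" if m: "m \<noteq> 0" for m
  proof -
    have "B m ** S = (\<Sum>l\<in>U. B (m * inverse l) ** A l)"
      unfolding S_def matrix_sum_left
      by (rule sum.cong) (auto simp: U_def matrix_mul_assoc B m)
    also have "\<dots> = (\<Sum>l\<in>U. B (m * inverse (l * m)) ** A (l * m))"
      by (rule sum.reindex_bij_witness[of _ "\<lambda>l. l * m" "\<lambda>l. l / m"]) (use m in \<open>auto simp: U_def\<close>)
    also have "\<dots> = (\<Sum>l\<in>U. B (inverse l) ** A l ** A m)"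
      by (rule sum.cong) (use m in \<open>auto simp: U_def A matrix_mul_assoc[symmetric] field_simps\<close>)
    also have "\<dots> = S ** A m"
      unfolding S_def matrix_sum_right ..
    finally show ?thesis .
  qed
  moreover have "mat_map \<pi> (- S) = mat 1"
  proof -
    have "card U = CARD('k) - 1" by (simp add: U_def card_Diff_subset)
    then have "(\<Sum>l\<in>U. \<pi> ((B (inverse l) ** A l) $ i $ j)) = - mat 1 $ i $ j" for i j
      using arg_cong[where f="\<lambda>M. M $ i $ j", OF reduction]
      by (simp add: U_def mat_map_nth of_nat_CARD_field)
    then show ?thesis
      by (simp add: vec_eq_iff mat_map_nth S_def sum_component ring_hom_to_uminus[OF H] ring_hom_to_sum[OF H])
  qed
  ultimately show ?thesis
    by (intro exI[of _ "- S"]) (simp add: matrix_uminus_left matrix_uminus_right)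
qed

lemma is_lift_conj:
  fixes \<pi>R :: "'r::comm_ring_1 \<Rightarrow> 'k::{field,finite}" and \<pi>S :: "'s::comm_ring_1 \<Rightarrow> 'k"
    and \<rho> :: "'r^2^2 \<Rightarrow> 's^2^2" and P Q :: "'s^2^2"
  assumes lift: "is_lift \<pi>R \<pi>S \<rho>" and H: "ring_hom_to \<pi>S"
    and PQ: "P ** Q = mat 1" and QP: "Q ** P = mat 1"
    and P1: "mat_map \<pi>S P = mat 1" and Q1: "mat_map \<pi>S Q = mat 1"
  shows "is_lift \<pi>R \<pi>S (\<lambda>g. P ** \<rho> g ** Q)"
proof -
  have conj_mult: "P ** X ** Q ** (P ** Y ** Q) = P ** (X ** Y) ** Q" for X Y :: "'s^2^2"
    by (simp add: matrix_mul_assoc) (simp add: matrix_mul_assoc[symmetric] QP)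
  show ?thesis
    unfolding is_lift_def
  proof (intro conjI ballI allI)
    fix g :: "'r^2^2" assume g: "g \<in> SL2"
    then obtain B where "\<rho> g ** B = mat 1" and "B ** \<rho> g = mat 1"
      using lift unfolding is_lift_def GL2_def invertible_def by blast
    then have "P ** \<rho> g ** Q ** (P ** B ** Q) = mat 1" and "P ** B ** Q ** (P ** \<rho> g ** Q) = mat 1"
      by (simp_all add: conj_mult PQ)
    then show "P ** \<rho> g ** Q \<in> GL2"
      unfolding GL2_def invertible_def by blast
    show "mat_map \<pi>S (P ** \<rho> g ** Q) = mat_map \<pi>R g"
      using lift g by (simp add: is_lift_def mat_map_mult[OF H] P1 Q1)
    fix n
    obtain m where "\<forall>h\<in>SL2. mat_cong (ideal_pow (max_ideal \<pi>R) m) h g \<longrightarrow>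
        mat_cong (ideal_pow (max_ideal \<pi>S) n) (\<rho> h) (\<rho> g)"
      using lift g unfolding is_lift_def by blast
    then show "\<exists>m. \<forall>h\<in>SL2. mat_cong (ideal_pow (max_ideal \<pi>R) m) h g \<longrightarrow>
        mat_cong (ideal_pow (max_ideal \<pi>S) n) (P ** \<rho> h ** Q) (P ** \<rho> g ** Q)"
      using mat_cong_conj[OF is_ideal_ideal_pow] by blast
  next
    fix g h :: "'r^2^2" assume "g \<in> SL2" "h \<in> SL2"
    then show "P ** \<rho> (g ** h) ** Q = P ** \<rho> g ** Q ** (P ** \<rho> h ** Q)"
      using lift by (simp add: is_lift_def conj_mult)
  qed
qed

lemma strictly_equiv_conj:
  assumes "ring_hom_to \<pi>S" and "P ** Q = mat 1" and "Q ** P = mat 1" and "mat_map \<pi>S P = mat 1"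
  shows "strictly_equiv \<pi>S \<rho> (\<lambda>g. P ** \<rho> g ** Q)"
  unfolding strictly_equiv_def
  using assms by (intro exI[of _ P] exI[of _ Q]) (simp add: mat_cong_max_ideal_iff mat_map_mat ring_hom_to_1)

definition teich_diag :: "('a::comm_ring_1 \<Rightarrow> 'k::{field,finite}) \<Rightarrow> 'k \<Rightarrow> 'a^2^2" where
  "teich_diag \<pi> l = diag2 (teich \<pi> l) (teich \<pi> (inverse l))"

lemma teich_diag_mult:
  "Chat_obj \<pi> \<Longrightarrow> l \<noteq> 0 \<Longrightarrow> m \<noteq> 0 \<Longrightarrow> teich_diag \<pi> l ** teich_diag \<pi> m = teich_diag \<pi> (l * m)"
  by (simp add: teich_diag_def diag2_mult teich_mult inverse_mult_distrib)

lemma teich_diag_in_SL2: "Chat_obj \<pi> \<Longrightarrow> l \<noteq> 0 \<Longrightarrow> teich_diag \<pi> l \<in> SL2"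
  by (simp add: teich_diag_def SL2_def det_diag2 teich_mult_inverse)

lemma mat_map_teich_diag:
  "Chat_obj \<pi> \<Longrightarrow> l \<noteq> 0 \<Longrightarrow> mat_map \<pi> (teich_diag \<pi> l) = diag2 l (inverse l)"
  by (simp add: teich_diag_def mat_map_diag2 Chat_obj_ring_hom teich_residue)

lemma diag2_mu_eq_teich_diag:
  fixes \<pi> :: "'a::comm_ring_1 \<Rightarrow> 'k::{field,finite}"
  assumes C: "Chat_obj \<pi>" and a: "a \<in> (mu TYPE('k) :: 'a set)"
  shows "\<pi> a \<noteq> 0" and "diag2 a (ring_inv a) = teich_diag \<pi> (\<pi> a)"
proof -
  have H: "ring_hom_to \<pi>" using C by (rule Chat_obj_ring_hom)
  have a_pow: "a ^ (CARD('k) - 1) = 1" using a by (simp add: mu_def)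
  then have "\<pi> a ^ (CARD('k) - 1) = 1" by (metis ring_hom_to_power[OF H] ring_hom_to_1[OF H])
  then show l: "\<pi> a \<noteq> 0" by (rule nonzero_if_power_CARD_minus_1_field)
  have "teich \<pi> (\<pi> a) = a" by (rule teich_eqI[OF C a_pow refl])
  with teich_mult_inverse[OF C l] show "diag2 a (ring_inv a) = teich_diag \<pi> (\<pi> a)"
    by (simp add: teich_diag_def ring_inv_eqI)
qed

lemma diag2_teich_transfer:
  fixes \<pi>R :: "'r::comm_ring_1 \<Rightarrow> 'k::{field,finite}" and \<pi>S :: "'s::comm_ring_1 \<Rightarrow> 'k"
  assumes "Chat_obj \<pi>S" and "\<pi>R a \<noteq> 0"
  shows "diag2 (teich_transfer \<pi>R \<pi>S a) (ring_inv (teich_transfer \<pi>R \<pi>S a)) = teich_diag \<pi>S (\<pi>R a)"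
  using teich_mult_inverse[OF assms]
  by (simp add: teich_transfer_eq_teich teich_diag_def ring_inv_eqI)

lemma lift_teich_diag_mult:
  assumes lift: "is_lift \<pi>R \<pi>S \<rho>" and C: "Chat_obj \<pi>R" and "l \<noteq> 0" and "m \<noteq> 0"
  shows "\<rho> (teich_diag \<pi>R l) ** \<rho> (teich_diag \<pi>R m) = \<rho> (teich_diag \<pi>R (l * m))"
proof -
  have "\<rho> (g ** h) = \<rho> g ** \<rho> h" if "g \<in> SL2" "h \<in> SL2" for g h
    using lift that unfolding is_lift_def by blast
  from this[OF teich_diag_in_SL2[OF C \<open>l \<noteq> 0\<close>] teich_diag_in_SL2[OF C \<open>m \<noteq> 0\<close>]] show ?thesis
    by (simp add: teich_diag_mult[OF C assms(3,4)])
qed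

lemma mat_map_lift_teich_diag:
  assumes lift: "is_lift \<pi>R \<pi>S \<rho>" and CR: "Chat_obj \<pi>R" and CS: "Chat_obj \<pi>S" and l: "l \<noteq> 0"
  shows "mat_map \<pi>S (teich_diag \<pi>S (inverse l) ** \<rho> (teich_diag \<pi>R l)) = mat 1"
proof -
  have "mat_map \<pi>S (\<rho> g) = mat_map \<pi>R g" if "g \<in> SL2" for g
    using lift that unfolding is_lift_def by blast
  from this[OF teich_diag_in_SL2[OF CR l]] l show ?thesis
    by (simp add: mat_map_mult[OF Chat_obj_ring_hom[OF CS]] mat_map_teich_diag[OF CS]
        mat_map_teich_diag[OF CR] diag2_mult diag2_1)
qed

lemma conj_eq_if_intertwines:
  "P ** Q = mat 1 \<Longrightarrow> D ** P = P ** X \<Longrightarrow> P ** X ** Q = (D::'a::comm_ring_1^'n^'n)"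
  by (metis matrix_mul_assoc matrix_mul_rid)

theorem mainTheorem18:
  fixes \<pi>R :: "'r::comm_ring_1 \<Rightarrow> 'k::{field,finite}"
    and \<pi>S :: "'s::comm_ring_1 \<Rightarrow> 'k"
    and \<rho> :: "'r^2^2 \<Rightarrow> 's^2^2"
  assumes "Chat_obj \<pi>R"
    and "Chat_obj \<pi>S"
    and "is_lift \<pi>R \<pi>S \<rho>"
  shows "\<exists>\<rho>'. is_lift \<pi>R \<pi>S \<rho>' \<and> strictly_equiv \<pi>S \<rho> \<rho>' \<and>
           (\<forall>a \<in> (mu TYPE('k) :: 'r set).
              \<rho>' (diag2 a (ring_inv a)) =
                diag2 (teich_transfer \<pi>R \<pi>S a) (ring_inv (teich_transfer \<pi>R \<pi>S a)))"
proof -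
  note CR = assms(1) and CS = assms(2) and lift = assms(3)
  have HS: "ring_hom_to \<pi>S" using CS by (rule Chat_obj_ring_hom)
  obtain P where P1: "mat_map \<pi>S P = mat 1"
    and intertwines: "\<forall>l. l \<noteq> 0 \<longrightarrow> teich_diag \<pi>S l ** P = P ** \<rho> (teich_diag \<pi>R l)"
    using intertwiner_exists[OF HS, of "\<lambda>l. \<rho> (teich_diag \<pi>R l)" "teich_diag \<pi>S"]
      lift_teich_diag_mult[OF lift CR] teich_diag_mult[OF CS] mat_map_lift_teich_diag[OF lift CR CS]
    by blast
  obtain Q where PQ: "P ** Q = mat 1" and QP: "Q ** P = mat 1" and Q1: "mat_map \<pi>S Q = mat 1"
    using invertible_if_mat_map_eq_1[OF CS P1] by blast
  have "P ** \<rho> (teich_diag \<pi>R l) ** Q = teich_diag \<pi>S l" if "l \<noteq> 0" for l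
    using conj_eq_if_intertwines[OF PQ] intertwines that by blast
  then show ?thesis
    using is_lift_conj[OF lift HS PQ QP P1 Q1] strictly_equiv_conj[OF HS PQ QP P1]
    by (intro exI[of _ "\<lambda>g. P ** \<rho> g ** Q"])
      (auto simp: diag2_mu_eq_teich_diag[OF CR] diag2_teich_transfer[OF CS])
qed
end
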